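(* Let $\mathbf{X}=[\mathbf{x}_1,\ldots,\mathbf{x}_n]\in\mathbb{R}^{d\times n}$ have nonzero columns, let $m$ be an integer with $2\le m<d$, and let $0<\alpha<1$. Let the random sampling matrices $\mathbf{S}_i$ and the estimator $\mathbf{C}_e=\widehat{\mathbf{C}}_1-\widehat{\mathbf{C}}_2$ be constructed by the DACE procedure described in the context, i.e. $m$ entries are sampled from each $\mathbf{x}_i$ with replacement according to the probabilities $p_{ki}=\alpha\frac{|x_{ki}|}{\|\mathbf{x}_i\|_1}+(1-\alpha)\frac{x_{ki}^2}{\|\mathbf{x}_i\|_2^2}$. Then $\mathbf{C}_e$ is an unbiased estimator of $\mathbf{C}=\frac{1}{n}\sum_{i=1}^n\mathbf{x}_i\mathbf{x}_i^T=\frac1n\mathbf{X}\mathbf{X}^T$, i.e. $\mathbb{E}[\mathbf{C}_e]=\mathbf{C}$.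
   Context: DACE construction. Given $\mathbf{X}=[\mathbf{x}_1,\ldots,\mathbf{x}_n]\in\mathbb{R}^{d\times n}$ with $\mathbf{x}_i=(x_{1i},\ldots,x_{di})^T$, an integer $m$ with $2\le m<d$ and $\alpha\in(0,1)$, set for $k\in[d]=\{1,\dots,d\}$ and $i\in[n]$: $p_{ki}=\alpha\frac{|x_{ki}|}{\|\mathbf{x}_i\|_1}+(1-\alpha)\frac{x_{ki}^2}{\|\mathbf{x}_i\|_2^2}$ (a probability distribution on $[d]$ for each $i$). For every $i$ and $j\in[m]$, draw indices $t_{ji}\in[d]$ independently (over all $i,j$) with $\mathbb{P}(t_{ji}=k)=p_{ki}$. Let $\mathbf{e}_1,\ldots,\mathbf{e}_d$ be the standard basis of $\mathbb{R}^d$ and let $\mathbf{S}_i\in\mathbb{R}^{d\times m}$ be the matrix whose $j$-th column is $\mathbf{e}_{t_{ji}}/\sqrt{m\,p_{t_{ji}i}}$. For a square matrix $\mathbf{A}$, $\mathbb{D}(\mathbf{A})$ is the diagonal matrix with the same main diagonal as $\mathbf{A}$; for a vector $\mathbf{b}$, $\mathbb{D}(\mathbf{b})$ is the diagonal matrix with $\mathbf{b}$ on its diagonal. Let $b_{ki}=\frac{1}{1+(m-1)p_{ki}}$ and $\mathbf{b}_i=(b_{1i},\ldots,b_{di})^T$. Define $\widehat{\mathbf{C}}_1=\frac{m}{nm-n}\sum_{i=1}^n\mathbf{S}_i\mathbf{S}_i^T\mathbf{x}_i\mathbf{x}_i^T\mathbf{S}_i\mathbf{S}_i^T$, $\widehat{\mathbf{C}}_2=\frac{m}{nm-n}\sum_{i=1}^n\mathbb{D}(\mathbf{S}_i\mathbf{S}_i^T\mathbf{x}_i\mathbf{x}_i^T\mathbf{S}_i\mathbf{S}_i^T)\mathbb{D}(\mathbf{b}_i)$,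 and $\mathbf{C}_e=\widehat{\mathbf{C}}_1-\widehat{\mathbf{C}}_2$. *)

theory Defs
  imports Complex_Main "HOL-Library.FuncSet"
begin

text \<open>Conventions: 0-based indices. Rows k < d, columns i < n, samples j < m.
  A d x n data matrix is X :: nat => nat => real with X k i = x_{ki}.
  Matrices are functions nat => nat => real; dimensions are passed explicitly.\<close>

definition norm1_col :: "nat \<Rightarrow> (nat \<Rightarrow> nat \<Rightarrow> real) \<Rightarrow> nat \<Rightarrow> real" where
  "norm1_col d X i = (\<Sum>k<d. \<bar>X k i\<bar>)"

definition norm2sq_col :: "nat \<Rightarrow> (nat \<Rightarrow> nat \<Rightarrow> real) \<Rightarrow> nat \<Rightarrow> real" where
  "norm2sq_col d X i = (\<Sum>k<d. (X k i)^2)"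

definition dace_p :: "real \<Rightarrow> nat \<Rightarrow> (nat \<Rightarrow> nat \<Rightarrow> real) \<Rightarrow> nat \<Rightarrow> nat \<Rightarrow> real" where
  "dace_p \<alpha> d X k i = \<alpha> * \<bar>X k i\<bar> / norm1_col d X i + (1 - \<alpha>) * (X k i)^2 / norm2sq_col d X i"

definition mmul :: "nat \<Rightarrow> (nat \<Rightarrow> nat \<Rightarrow> real) \<Rightarrow> (nat \<Rightarrow> nat \<Rightarrow> real) \<Rightarrow> nat \<Rightarrow> nat \<Rightarrow> real" where
  "mmul r A B a b = (\<Sum>s<r. A a s * B s b)"

definition mtrans :: "(nat \<Rightarrow> nat \<Rightarrow> real) \<Rightarrow> nat \<Rightarrow> nat \<Rightarrow> real" where
  "mtrans A a b = A b a"

definition diag_of_mat :: "(nat \<Rightarrow> nat \<Rightarrow> real) \<Rightarrow> nat \<Rightarrow> nat \<Rightarrow> real" where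
  "diag_of_mat A k l = (if k = l then A k k else 0)"

definition diag_of_vec :: "(nat \<Rightarrow> real) \<Rightarrow> nat \<Rightarrow> nat \<Rightarrow> real" where
  "diag_of_vec v k l = (if k = l then v k else 0)"

definition col_mat :: "(nat \<Rightarrow> nat \<Rightarrow> real) \<Rightarrow> nat \<Rightarrow> nat \<Rightarrow> nat \<Rightarrow> real" where
  "col_mat X i k c = X k i"

text \<open>Sampling matrix S_i (d x m) for sampled indices t (t (j,i) = t_{ji}):
  column j is e_{t_{ji}} / sqrt(m p_{t_{ji} i}).\<close>
definition dace_S :: "real \<Rightarrow> nat \<Rightarrow> nat \<Rightarrow> (nat \<Rightarrow> nat \<Rightarrow> real) \<Rightarrow> (nat \<times> nat \<Rightarrow> nat) \<Rightarrow> nat \<Rightarrow> nat \<Rightarrow> nat \<Rightarrow> real" where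
  "dace_S \<alpha> d m X t i k j =
     (if t (j, i) = k then 1 / sqrt (real m * dace_p \<alpha> d X (t (j, i)) i) else 0)"

definition dace_M :: "real \<Rightarrow> nat \<Rightarrow> nat \<Rightarrow> (nat \<Rightarrow> nat \<Rightarrow> real) \<Rightarrow> (nat \<times> nat \<Rightarrow> nat) \<Rightarrow> nat \<Rightarrow> nat \<Rightarrow> nat \<Rightarrow> real" where
  "dace_M \<alpha> d m X t i =
     (let S = dace_S \<alpha> d m X t i;
          SSt = mmul m S (mtrans S);
          xxt = mmul 1 (col_mat X i) (mtrans (col_mat X i))
      in mmul d (mmul d SSt xxt) SSt)"

definition dace_b :: "real \<Rightarrow> nat \<Rightarrow> nat \<Rightarrow> (nat \<Rightarrow> nat \<Rightarrow> real) \<Rightarrow> nat \<Rightarrow> nat \<Rightarrow> real" where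
  "dace_b \<alpha> d m X i k = 1 / (1 + (real m - 1) * dace_p \<alpha> d X k i)"

definition dace_C1 where
  "dace_C1 \<alpha> d m n X t k l =
     real m / (real n * real m - real n) * (\<Sum>i<n. dace_M \<alpha> d m X t i k l)"

definition dace_C2 where
  "dace_C2 \<alpha> d m n X t k l =
     real m / (real n * real m - real n) *
       (\<Sum>i<n. mmul d (diag_of_mat (dace_M \<alpha> d m X t i)) (diag_of_vec (dace_b \<alpha> d m X i)) k l)"

definition dace_Ce where
  "dace_Ce \<alpha> d m n X t k l = dace_C1 \<alpha> d m n X t k l - dace_C2 \<alpha> d m n X t k l"

text \<open>Sample space of all index draws t_{ji} in [d], j < m, i < n, and the probability
  of a draw under independent sampling with P(t_{ji} = k) = p_{ki}.\<close>
definition dace_space :: "nat \<Rightarrow> nat \<Rightarrow> nat \<Rightarrow> (nat \<times> nat \<Rightarrow> nat) set" where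
  "dace_space d m n = ({..<m} \<times> {..<n}) \<rightarrow>\<^sub>E {..<d}"

definition dace_prob where
  "dace_prob \<alpha> d m n X t = (\<Prod>(j, i) \<in> {..<m} \<times> {..<n}. dace_p \<alpha> d X (t (j, i)) i)"

definition dace_E where
  "dace_E \<alpha> d m n X F k l = (\<Sum>t \<in> dace_space d m n. dace_prob \<alpha> d m n X t * F t k l)"

end

(*
  S_i S_i^T is diagonal with entries c_k / (m p_k), where c_k counts the draws t_{ji} = k, so the
  (k,l) entry of S_i S_i^T x_i x_i^T S_i S_i^T is x_k x_l c_k c_l / (m^2 p_k p_l).  Since distinct
  draws are independent, E[c_k c_l] = m [k = l] p_k + m (m - 1) p_k p_l.  Hence the off-diagonal
  entries of the expectation are (m - 1)/m x_k x_l, while the diagonal ones carry the extra term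
  x_k^2 / (m p_k); this term equals b_k times the diagonal entry itself, so C_2 removes exactly it.
  The factor m / (n (m - 1)) then turns the sum over i into C.
*)
theory Submission
  imports Defs
begin

lemma sum_PiE_prod_mult_prod:
  fixes q g :: "'a \<Rightarrow> 'b \<Rightarrow> 'c::comm_semiring_1"
  assumes fin_I: "finite I" and fin_A: "\<And>z. z \<in> I \<Longrightarrow> finite (A z)" and J: "J \<subseteq> I"
    and q_sum: "\<And>z. z \<in> I - J \<Longrightarrow> (\<Sum>c\<in>A z. q z c) = 1"
  shows "(\<Sum>t\<in>PiE I A. (\<Prod>z\<in>I. q z (t z)) * (\<Prod>z\<in>J. g z (t z)))
       = (\<Prod>z\<in>J. \<Sum>c\<in>A z. q z c * g z c)"
proof -
  define g' where "g' z c = (if z \<in> J then g z c else 1)" for z c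
  have "(\<Prod>z\<in>J. h z) = (\<Prod>z\<in>I. if z \<in> J then h z else 1)" for h :: "'a \<Rightarrow> 'c"
    using fin_I J by (simp add: prod.If_cases Int_absorb1)
  then have "(\<Sum>t\<in>PiE I A. (\<Prod>z\<in>I. q z (t z)) * (\<Prod>z\<in>J. g z (t z)))
       = (\<Sum>t\<in>PiE I A. \<Prod>z\<in>I. q z (t z) * g' z (t z))"
    by (simp add: g'_def prod.distrib)
  also have "\<dots> = (\<Prod>z\<in>I. \<Sum>c\<in>A z. q z c * g' z c)"
    using fin_I fin_A by (rule prod_sum_PiE[symmetric])
  also have "\<dots> = (\<Prod>z\<in>I. if z \<in> J then \<Sum>c\<in>A z. q z c * g z c else 1)"
    using q_sum by (intro prod.cong) (auto simp: g'_def)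
  also have "\<dots> = (\<Prod>z\<in>J. \<Sum>c\<in>A z. q z c * g z c)"
    using fin_I J by (simp add: prod.If_cases Int_absorb1)
  finally show ?thesis .
qed

lemma sum_PiE_prod_mult_of_bool_pair:
  fixes q :: "'a \<Rightarrow> 'b \<Rightarrow> real"
  assumes fin_I: "finite I" and fin_A: "\<And>z. z \<in> I \<Longrightarrow> finite (A z)"
    and q_sum: "\<And>z. z \<in> I \<Longrightarrow> (\<Sum>c\<in>A z. q z c) = 1"
    and x: "x \<in> I" "a \<in> A x" and y: "y \<in> I" "b \<in> A y"
  shows "(\<Sum>t\<in>PiE I A. (\<Prod>z\<in>I. q z (t z)) * of_bool (t x = a \<and> t y = b))
       = (if x = y then of_bool (a = b) * q x a else q x a * q y b)"
proof (cases "x = y")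
  case True
  have "(\<Sum>t\<in>PiE I A. (\<Prod>z\<in>I. q z (t z)) * of_bool (t x = a \<and> t y = b))
      = (\<Prod>z\<in>{x}. \<Sum>c\<in>A z. q z c * of_bool (c = a \<and> c = b))"
    using sum_PiE_prod_mult_prod[where I=I and A=A and q=q and J="{x}"
        and g="\<lambda>_ c. of_bool (c = a \<and> c = b)"] fin_I fin_A True x q_sum
    by simp
  also have "\<dots> = of_bool (a = b) * q x a"
    using fin_A x by (cases "a = b") (auto intro: sum.neutral)
  finally show ?thesis using True by simp
next
  case False
  have "(\<Sum>t\<in>PiE I A. (\<Prod>z\<in>I. q z (t z)) * of_bool (t x = a \<and> t y = b))
      = (\<Prod>z\<in>{x, y}. \<Sum>c\<in>A z. q z c * of_bool (c = (if z = x then a else b)))"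
    using sum_PiE_prod_mult_prod[where I=I and A=A and q=q and J="{x, y}"
        and g="\<lambda>z c. of_bool (c = (if z = x then a else b))"] fin_I fin_A False x y q_sum
    by (simp add: of_bool_conj)
  also have "\<dots> = q x a * q y b"
    using False fin_A x y by auto
  finally show ?thesis using False by simp
qed

lemma sum_sum_if_eq:
  fixes a b :: "'a::comm_ring_1"
  shows "(\<Sum>j<m. \<Sum>j'<m. if j = j' then a else b) = of_nat m * a + of_nat m * (of_nat m - 1) * b"
proof -
  have "(\<Sum>j'<m. if j = j' then a else b) = of_nat m * b + (a - b)" if "j < m" for j
  proof -
    have "(\<Sum>j'<m. if j = j' then a else b) = (\<Sum>j'<m. b + of_bool (j = j') * (a - b))"
      by (intro sum.cong) auto
    then show ?thesis using that by (simp add: sum.distrib)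
  qed
  then have "(\<Sum>j<m. \<Sum>j'<m. if j = j' then a else b) = (\<Sum>j<m. of_nat m * b + (a - b))"
    by (intro sum.cong) auto
  then show ?thesis by (simp add: algebra_simps)
qed

lemma mmul_diag_of_vec_left: "k < r \<Longrightarrow> mmul r (diag_of_vec v) A k l = v k * A k l"
  by (simp add: mmul_def diag_of_vec_def if_distrib if_distribR sum.delta cong: if_cong)

lemma mmul_diag_of_vec_right: "l < r \<Longrightarrow> mmul r A (diag_of_vec v) k l = A k l * v l"
  by (simp add: mmul_def diag_of_vec_def if_distrib if_distribR sum.delta' cong: if_cong)

lemma norm1_col_pos: "k < d \<Longrightarrow> X k i \<noteq> 0 \<Longrightarrow> 0 < norm1_col d X i"
  unfolding norm1_col_def
  by (rule sum_pos2[where i=k]) auto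

lemma norm2sq_col_pos: "k < d \<Longrightarrow> X k i \<noteq> 0 \<Longrightarrow> 0 < norm2sq_col d X i"
  unfolding norm2sq_col_def
  by (rule sum_pos2[where i=k]) auto

lemma dace_p_nonneg: "0 \<le> \<alpha> \<Longrightarrow> \<alpha> \<le> 1 \<Longrightarrow> 0 \<le> dace_p \<alpha> d X k i"
  unfolding dace_p_def norm1_col_def norm2sq_col_def
  by (intro add_nonneg_nonneg divide_nonneg_nonneg mult_nonneg_nonneg sum_nonneg) auto

lemma dace_p_pos:
  assumes "0 \<le> \<alpha>" "\<alpha> \<le> 1" "k < d" "X k i \<noteq> 0"
  shows "0 < dace_p \<alpha> d X k i"
proof -
  have l1: "0 < \<bar>X k i\<bar> / norm1_col d X i" and l2: "0 < (X k i)^2 / norm2sq_col d X i"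
    using assms(3,4) norm1_col_pos[of k d X i] norm2sq_col_pos[of k d X i] by simp_all
  have "0 < \<alpha> * (\<bar>X k i\<bar> / norm1_col d X i) + (1 - \<alpha>) * ((X k i)^2 / norm2sq_col d X i)"
  proof (cases "\<alpha> = 0")
    case False
    then show ?thesis
      by (intro add_pos_nonneg mult_pos_pos mult_nonneg_nonneg) (use assms(1,2) l1 l2 in auto)
  qed (use l2 in simp)
  then show ?thesis by (simp add: dace_p_def)
qed

lemma sum_dace_p:
  assumes "k < d" "X k i \<noteq> 0"
  shows "(\<Sum>k'<d. dace_p \<alpha> d X k' i) = 1"
proof -
  have "norm1_col d X i \<noteq> 0" "norm2sq_col d X i \<noteq> 0"
    using assms norm1_col_pos[of k d X i] norm2sq_col_pos[of k d X i] by simp_all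
  then show ?thesis
    unfolding dace_p_def sum.distrib sum_divide_distrib[symmetric] sum_distrib_left[symmetric]
    by (simp add: norm1_col_def norm2sq_col_def)
qed

definition sample_count :: "nat \<Rightarrow> (nat \<times> nat \<Rightarrow> nat) \<Rightarrow> nat \<Rightarrow> nat \<Rightarrow> real" where
  "sample_count m t i k = (\<Sum>j<m. of_bool (t (j, i) = k))"

lemma dace_S_gram:
  assumes "0 \<le> \<alpha>" "\<alpha> \<le> 1"
  shows "mmul m (dace_S \<alpha> d m X t i) (mtrans (dace_S \<alpha> d m X t i))
       = diag_of_vec (\<lambda>k. sample_count m t i k / (real m * dace_p \<alpha> d X k i))"
proof (intro ext)
  fix a b
  have "dace_S \<alpha> d m X t i a j * dace_S \<alpha> d m X t i b j
      = of_bool (a = b) * of_bool (t (j, i) = a) / (real m * dace_p \<alpha> d X a i)" for j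
  proof -
    have "1 / sqrt y * (1 / sqrt y) = 1 / y" if "0 \<le> y" for y :: real
      using that by (simp add: real_sqrt_mult_self)
    then show ?thesis
      using dace_p_nonneg[OF assms, of d X a i] by (simp add: dace_S_def)
  qed
  then show "mmul m (dace_S \<alpha> d m X t i) (mtrans (dace_S \<alpha> d m X t i)) a b
      = diag_of_vec (\<lambda>k. sample_count m t i k / (real m * dace_p \<alpha> d X k i)) a b"
    by (simp add: mmul_def mtrans_def diag_of_vec_def sample_count_def sum_divide_distrib del: sum_of_bool_eq)
qed

lemma dace_M_entry:
  assumes "0 \<le> \<alpha>" "\<alpha> \<le> 1" "k < d" "l < d"
  shows "dace_M \<alpha> d m X t i k l
       = sample_count m t i k / (real m * dace_p \<alpha> d X k i) * (X k i * X l i)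
         * (sample_count m t i l / (real m * dace_p \<alpha> d X l i))"
  using assms
  by (simp add: dace_M_def Let_def dace_S_gram mmul_diag_of_vec_left mmul_diag_of_vec_right)
     (simp add: mmul_def col_mat_def mtrans_def)

lemma sum_dace_prob_sample_count_mult:
  assumes nonzero_cols: "\<forall>i<n. \<exists>k<d. X k i \<noteq> 0" and "i < n" "k < d" "l < d"
  shows "(\<Sum>t\<in>dace_space d m n. dace_prob \<alpha> d m n X t * (sample_count m t i k * sample_count m t i l))
       = real m * of_bool (k = l) * dace_p \<alpha> d X k i
         + real m * (real m - 1) * (dace_p \<alpha> d X k i * dace_p \<alpha> d X l i)"
proof -
  define I where "I = {..<m} \<times> {..<n}"
  define q where "q x c = dace_p \<alpha> d X c (snd x)" for x :: "nat \<times> nat" and c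
  have prob: "dace_prob \<alpha> d m n X t = (\<Prod>x\<in>I. q x (t x))" for t
    unfolding dace_prob_def q_def I_def by (intro prod.cong) auto
  have q_sum: "(\<Sum>c<d. q x c) = 1" if x: "x \<in> I" for x
  proof -
    obtain k' where "k' < d" "X k' (snd x) \<noteq> 0"
      using x nonzero_cols by (auto simp: I_def)
    then show ?thesis unfolding q_def by (rule sum_dace_p)
  qed
  have pair: "(\<Sum>t\<in>dace_space d m n. dace_prob \<alpha> d m n X t * of_bool (t (j, i) = k \<and> t (j', i) = l))
      = (if j = j' then of_bool (k = l) * dace_p \<alpha> d X k i else dace_p \<alpha> d X k i * dace_p \<alpha> d X l i)"
    if "j < m" "j' < m" for j j'
    using sum_PiE_prod_mult_of_bool_pair[of I "\<lambda>_. {..<d}" q "(j, i)" k "(j', i)" l]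
      that assms q_sum
    by (simp add: dace_space_def I_def prob q_def)
  have "sample_count m t i k * sample_count m t i l
      = (\<Sum>j<m. \<Sum>j'<m. of_bool (t (j, i) = k \<and> t (j', i) = l))" for t
    by (simp add: sample_count_def sum_product of_bool_conj del: sum_of_bool_eq)
  then have "(\<Sum>t\<in>dace_space d m n. dace_prob \<alpha> d m n X t * (sample_count m t i k * sample_count m t i l))
      = (\<Sum>t\<in>dace_space d m n. \<Sum>j<m. \<Sum>j'<m.
           dace_prob \<alpha> d m n X t * of_bool (t (j, i) = k \<and> t (j', i) = l))"
    by (simp only: sum_distrib_left)
  also have "\<dots> = (\<Sum>j<m. \<Sum>j'<m. \<Sum>t\<in>dace_space d m n.
           dace_prob \<alpha> d m n X t * of_bool (t (j, i) = k \<and> t (j', i) = l))"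
    by (subst sum.swap, subst (2) sum.swap) (rule refl)
  also have "\<dots> = (\<Sum>j<m. \<Sum>j'<m. if j = j' then of_bool (k = l) * dace_p \<alpha> d X k i
                                   else dace_p \<alpha> d X k i * dace_p \<alpha> d X l i)"
    using pair by simp
  also have "\<dots> = real m * of_bool (k = l) * dace_p \<alpha> d X k i
         + real m * (real m - 1) * (dace_p \<alpha> d X k i * dace_p \<alpha> d X l i)"
    by (simp only: sum_sum_if_eq mult.assoc)
  finally show ?thesis .
qed

lemma dace_E_dace_M:
  assumes nonzero_cols: "\<forall>i<n. \<exists>k<d. X k i \<noteq> 0"
    and \<alpha>: "0 \<le> \<alpha>" "\<alpha> \<le> 1" and m: "0 < m" and i: "i < n" and kl: "k < d" "l < d"
  shows "dace_E \<alpha> d m n X (\<lambda>t. dace_M \<alpha> d m X t i) k l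
       = X k i * X l i * (of_bool (k = l) / (real m * dace_p \<alpha> d X k i) + (real m - 1) / real m)"
proof -
  define p where "p k' = dace_p \<alpha> d X k' i" for k'
  have "dace_E \<alpha> d m n X (\<lambda>t. dace_M \<alpha> d m X t i) k l
      = X k i * X l i / (real m * p k * (real m * p l))
        * (\<Sum>t\<in>dace_space d m n. dace_prob \<alpha> d m n X t * (sample_count m t i k * sample_count m t i l))"
    using \<alpha> kl by (simp add: dace_E_def dace_M_entry p_def sum_distrib_left sum_divide_distrib mult_ac)
  also have "\<dots> = X k i * X l i / (real m * p k * (real m * p l))
        * (real m * of_bool (k = l) * p k + real m * (real m - 1) * (p k * p l))"
    using sum_dace_prob_sample_count_mult[OF nonzero_cols i kl] by (simp add: p_def)
  also have "\<dots> = X k i * X l i * (of_bool (k = l) / (real m * p k) + (real m - 1) / real m)"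
  proof (cases "X k i = 0 \<or> X l i = 0")
    case True
    \<comment> \<open>then p k or p l may vanish, but the junk value 1 / 0 = 0 gets multiplied by 0\<close>
    then show ?thesis by auto
  next
    case False
    then have "0 < p k" "0 < p l"
      using dace_p_pos[OF \<alpha>] kl by (auto simp: p_def)
    then show ?thesis using m by (cases "k = l") (simp_all add: field_simps)
  qed
  finally show ?thesis by (simp add: p_def)
qed

lemma dace_E_dace_M_debiased:
  assumes nonzero_cols: "\<forall>i<n. \<exists>k<d. X k i \<noteq> 0"
    and \<alpha>: "0 \<le> \<alpha>" "\<alpha> \<le> 1" and m: "0 < m" and i: "i < n" and kl: "k < d" "l < d"
  shows "dace_E \<alpha> d m n X (\<lambda>t. dace_M \<alpha> d m X t i) k l
         - of_bool (k = l) * dace_E \<alpha> d m n X (\<lambda>t. dace_M \<alpha> d m X t i) k k * dace_b \<alpha> d m X i k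
       = (real m - 1) / real m * (X k i * X l i)"
proof (cases "k = l \<and> X k i \<noteq> 0")
  case True
  then have "l = k" "X k i \<noteq> 0" by auto
  define p where "p = dace_p \<alpha> d X k i"
  define r where "r = 1 + (real m - 1) * p"
  have "0 < p"
    using dace_p_pos[OF \<alpha> kl(1)] \<open>X k i \<noteq> 0\<close> by (simp add: p_def)
  then have "0 < r"
    using m by (simp add: r_def add_pos_nonneg)
  have E: "dace_E \<alpha> d m n X (\<lambda>t. dace_M \<alpha> d m X t i) k k = X k i * X k i * r / (real m * p)"
    using dace_E_dace_M[OF assms(1-6) kl(1)] \<open>0 < p\<close> m by (simp add: p_def[symmetric] r_def field_simps)
  have "X k i * X k i * r / (real m * p) - X k i * X k i * r / (real m * p) * (1 / r)
      = X k i * X k i * (r - 1) / (real m * p)"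
    using \<open>0 < r\<close> by (simp add: diff_divide_distrib right_diff_distrib)
  also have "\<dots> = (real m - 1) / real m * (X k i * X k i)"
    using \<open>0 < p\<close> by (simp add: r_def)
  finally show ?thesis
    unfolding \<open>l = k\<close> E by (simp add: dace_b_def p_def[symmetric] r_def[symmetric])
next
  case False
  then show ?thesis
    using dace_E_dace_M[OF assms] by auto
qed

lemma dace_E_dace_Ce:
  assumes "k < d" "l < d"
  shows "dace_E \<alpha> d m n X (dace_Ce \<alpha> d m n X) k l
       = real m / (real n * real m - real n)
         * (\<Sum>i<n. dace_E \<alpha> d m n X (\<lambda>t. dace_M \<alpha> d m X t i) k l
              - of_bool (k = l) * dace_E \<alpha> d m n X (\<lambda>t. dace_M \<alpha> d m X t i) k k * dace_b \<alpha> d m X i k)"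
proof -
  have "dace_Ce \<alpha> d m n X t k l
      = real m / (real n * real m - real n)
        * (\<Sum>i<n. dace_M \<alpha> d m X t i k l - of_bool (k = l) * dace_M \<alpha> d m X t i k k * dace_b \<alpha> d m X i k)"
    for t
    using assms
    by (cases "k = l")
       (simp_all add: dace_Ce_def dace_C1_def dace_C2_def mmul_diag_of_vec_right diag_of_mat_def
         sum_subtractf right_diff_distrib)
  then show ?thesis
    by (simp add: dace_E_def sum_distrib_left sum_subtractf right_diff_distrib
        sum.swap[of _ "dace_space d m n"] mult_ac)
qed

theorem theorem1:
  fixes X :: "nat \<Rightarrow> nat \<Rightarrow> real" and d m n :: nat and \<alpha> :: real
  assumes nonzero_cols: "\<forall>i<n. \<exists>k<d. X k i \<noteq> 0"
    and m_ge: "2 \<le> m" and m_lt: "m < d"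
    and alpha_pos: "0 < \<alpha>" and alpha_lt: "\<alpha> < 1"
  shows "\<forall>k<d. \<forall>l<d.
           dace_E \<alpha> d m n X (dace_Ce \<alpha> d m n X) k l = (1 / real n) * (\<Sum>i<n. X k i * X l i)"
proof (intro allI impI)
  fix k l assume kl: "k < d" "l < d"
  have \<alpha>: "0 \<le> \<alpha>" "\<alpha> \<le> 1" and m: "0 < m"
    using alpha_pos alpha_lt m_ge by auto
  have "dace_E \<alpha> d m n X (dace_Ce \<alpha> d m n X) k l
      = real m / (real n * real m - real n) * (\<Sum>i<n. (real m - 1) / real m * (X k i * X l i))"
    using dace_E_dace_Ce[OF kl] dace_E_dace_M_debiased[OF nonzero_cols \<alpha> m _ kl] by simp
  also have "\<dots> = real m / (real n * real m - real n) * ((real m - 1) / real m) * (\<Sum>i<n. X k i * X l i)"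
    by (simp add: sum_distrib_left mult.assoc)
  also have "real m / (real n * real m - real n) * ((real m - 1) / real m) = 1 / real n"
    using m_ge by (cases "n = 0") (simp_all add: field_simps)
  finally show "dace_E \<alpha> d m n X (dace_Ce \<alpha> d m n X) k l = (1 / real n) * (\<Sum>i<n. X k i * X l i)" .
qed

end
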